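(* Let $0<q<1$, $0\le p<1$, and let $\tilde P_n(x)=\sum_{k=0}^n\tilde b_{k,n}x^k$ be the orthonormal polynomials (positive leading coefficients) for the moment sequence $(\tilde s_n)$. The monic polynomials $\tilde p_n=\tilde P_n/\tilde b_{n,n}$ satisfy $\tilde p_n(x)=(x-\tilde c_n)\tilde p_{n-1}(x)-\tilde\lambda_n\tilde p_{n-2}(x)$ for $n\ge1$ ($\tilde p_{-1}=0$, $\tilde p_0=1$), where \[ \tilde c_1=\frac{(p;q)_\infty}{\Delta_1}q^{-3/2}, \] and for $n\ge1$ \[ \tilde c_{n+1}=\bigl[(1-q^{n+1})(pq^n;q)_\infty-(1-pq^{n+1})(q^n;q)_\infty\bigr]\frac{q^{-2n-3/2}}{(1-q)\Delta_{n+1}} -\bigl[(1-q^{n})(pq^{n-1};q)_\infty-(1-pq^{n})(q^{n-1};q)_\infty\bigr]\frac{q^{-2n+1/2}}{(1-q)\Delta_n}, \] \[ \tilde\lambda_{n+1}=\frac{\Delta_{n-1}\Delta_{n+1}}{\Delta_{n}^2}(1-q^{n})(1-pq^{n})q^{-4n}. \]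
   Context: For $a\in\mathbb C$ and $n\in\{0,1,\dots\}\cup\{\infty\}$, $(a;q)_n=\prod_{k=1}^n(1-aq^{k-1})$. Set $\Delta_n=(pq^n;q)_\infty-(q^n;q)_\infty$ for $n\ge0$. The moment sequence is $\tilde s_0=q^{-1/2}\bigl[1-(q;q)_\infty/(pq;q)_\infty\bigr]$ and $\tilde s_n=(p;q)_nq^{-(n+1)^2/2}$ for $n\ge1$. *)

theory Defs
  imports "HOL-Analysis.Analysis" "HOL-Computational_Algebra.Polynomial"
begin

definition qpoch :: "real \<Rightarrow> real \<Rightarrow> nat \<Rightarrow> real" where
  "qpoch a q n = (\<Prod>k<n. 1 - a * q ^ k)"

definition qpoch_inf :: "real \<Rightarrow> real \<Rightarrow> real" where
  "qpoch_inf a q = (\<Prod>k. 1 - a * q ^ k)"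

definition Delta :: "real \<Rightarrow> real \<Rightarrow> nat \<Rightarrow> real" where
  "Delta p q n = qpoch_inf (p * q ^ n) q - qpoch_inf (q ^ n) q"

definition smom :: "real \<Rightarrow> real \<Rightarrow> nat \<Rightarrow> real" where
  "smom p q n = (if n = 0
      then q powr (-1/2) * (1 - qpoch_inf q q / qpoch_inf (p * q) q)
      else qpoch p q n * q powr (- (real (n + 1))\<^sup>2 / 2))"

definition momL :: "real \<Rightarrow> real \<Rightarrow> real poly \<Rightarrow> real" where
  "momL p q P = (\<Sum>k\<le>degree P. coeff P k * smom p q k)"

end

theory Submission
  imports Defs
begin

text \<open>Let \<open>Q\<^sub>n\<close> be the monic polynomials generated by the asserted three-term recurrence.
  Multiplying by \<open>x\<close> shifts moments, so the table \<open>L(x\<^sup>k Q\<^sub>n)\<close> obeys the same recurrence in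
  \<open>n\<close> with \<open>k\<close> shifted; it is therefore determined by its first two rows, and the explicit form
  \<open>s\<^sub>k (q\<^bsup>1-k\<^esup>; q)\<^sub>n\<^sub>-\<^sub>1 (-1)\<^bsup>n+1\<^esup> q\<^bsup>-n\<^sup>2-n/2\<^esup> (q\<^bsup>-k\<^esup> - ((pq\<^sup>n;q)\<^sub>\<infinity> - p(q\<^sup>n;q)\<^sub>\<infinity>)/\<Delta>\<^sub>n)\<close>
  for \<open>k > 0\<close> (and \<open>0\<close> for \<open>k = 0 < n\<close>) satisfies the recurrence. Using
  \<open>(a;q)\<^sub>\<infinity> = (1-a)(aq;q)\<^sub>\<infinity>\<close>, checking this is a polynomial identity in \<open>q\<^bsup>1/2\<^esup>\<close>, \<open>q\<^sup>n\<close>,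
  \<open>q\<^sup>k\<close> and the two infinite products, and \<open>\<Delta>\<^sub>n > 0\<close> makes every division legitimate.
  The factor \<open>(q\<^bsup>1-k\<^esup>; q)\<^sub>n\<^sub>-\<^sub>1\<close> vanishes for \<open>0 < k < n\<close>, so \<open>Q\<^sub>n\<close> is orthogonal to all
  polynomials of lower degree, and a monic polynomial with this property is the normalised
  orthonormal polynomial \<open>P\<^sub>n / b\<^sub>n\<^sub>n\<close>.\<close>

section \<open>Moment functionals and monic orthogonal polynomials\<close>

definition moment_functional :: "(nat \<Rightarrow> 'a::comm_ring_1) \<Rightarrow> 'a poly \<Rightarrow> 'a" where
  "moment_functional s P = (\<Sum>k\<le>degree P. coeff P k * s k)"

lemma momL_eq_moment_functional: "momL p q = moment_functional (smom p q)"
  by (simp add: fun_eq_iff momL_def moment_functional_def)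

lemma moment_functional_upto:
  "degree P \<le> N \<Longrightarrow> moment_functional s P = (\<Sum>k\<le>N. coeff P k * s k)"
  unfolding moment_functional_def by (intro sum.mono_neutral_left) (auto simp: coeff_eq_0)

lemma moment_functional_add:
  "moment_functional s (P + R) = moment_functional s P + moment_functional s R"
proof -
  let ?N = "max (degree P) (degree R)"
  have "degree (P + R) \<le> ?N" by (rule degree_add_le) auto
  then show ?thesis
    by (simp add: moment_functional_upto[of _ ?N] moment_functional_upto[of P ?N]
        moment_functional_upto[of R ?N] sum.distrib algebra_simps)
qed

lemma moment_functional_smult: "moment_functional s (smult a P) = a * moment_functional s P"
proof -
  have "moment_functional s (smult a P) = (\<Sum>k\<le>degree P. coeff (smult a P) k * s k)"
    by (rule moment_functional_upto[OF degree_smult_le])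
  then show ?thesis by (simp add: moment_functional_def sum_distrib_left mult.assoc)
qed

lemma moment_functional_diff:
  "moment_functional s (P - R) = moment_functional s P - moment_functional s R"
  using moment_functional_add[of s P "- R"] moment_functional_smult[of s "- 1" R] by simp

lemma moment_functional_0 [simp]: "moment_functional s 0 = 0"
  unfolding moment_functional_def by simp

lemma moment_functional_sum:
  "finite I \<Longrightarrow> moment_functional s (\<Sum>i\<in>I. f i) = (\<Sum>i\<in>I. moment_functional s (f i))"
  by (induction I rule: finite_induct) (simp_all add: moment_functional_add)

lemma moment_functional_monom: "moment_functional s (monom a k) = a * s k"
proof -
  have "moment_functional s (monom a k) = (\<Sum>j\<le>k. coeff (monom a k) j * s j)"
    by (rule moment_functional_upto) (rule degree_monom_le)
  also have "\<dots> = (\<Sum>j\<le>k. if j = k then a * s j else 0)"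
    by (intro sum.cong) (auto simp: coeff_monom)
  finally show ?thesis by simp
qed

lemma moment_functional_monom_mult_vanish:
  assumes "\<And>k. k < n \<Longrightarrow> moment_functional s (monom 1 k * X) = 0" and "degree R < n"
  shows "moment_functional s (R * X) = 0"
proof -
  have monom_eq: "monom a i = smult a (monom 1 i)" for a :: 'a and i
    by (simp add: smult_monom)
  have "R * X = (\<Sum>i\<le>degree R. monom (coeff R i) i) * X"
    by (simp add: poly_as_sum_of_monoms)
  also have "\<dots> = (\<Sum>i\<le>degree R. smult (coeff R i) (monom 1 i * X))"
    by (subst monom_eq) (simp add: sum_distrib_right mult_smult_left)
  finally have "R * X = (\<Sum>i\<le>degree R. smult (coeff R i) (monom 1 i * X))" .
  then show ?thesis using assms by (simp add: moment_functional_sum moment_functional_smult)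
qed

fun three_term_poly :: "(nat \<Rightarrow> 'a) \<Rightarrow> (nat \<Rightarrow> 'a) \<Rightarrow> nat \<Rightarrow> 'a::comm_ring_1 poly" where
  "three_term_poly c l 0 = 1"
| "three_term_poly c l (Suc 0) = [:- c 1, 1:]"
| "three_term_poly c l (Suc (Suc m)) =
     [:- c (Suc (Suc m)), 1:] * three_term_poly c l (Suc m) - smult (l (Suc (Suc m))) (three_term_poly c l m)"

lemma three_term_poly_monic:
  "degree (three_term_poly c l n) = n \<and> coeff (three_term_poly c l n) n = 1"
proof (induction c l n rule: three_term_poly.induct)
  case (3 c l m)
  let ?Q = "three_term_poly c l (Suc (Suc m))"
  have x_mult: "[:- c (Suc (Suc m)), 1:] * three_term_poly c l (Suc m)
      = smult (- c (Suc (Suc m))) (three_term_poly c l (Suc m)) + pCons 0 (three_term_poly c l (Suc m))"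
    by (simp add: mult_pCons_left)
  have "degree ?Q \<le> Suc (Suc m)"
    using 3 by (auto intro!: degree_diff_le degree_add_le order.trans[OF degree_smult_le]
      simp: x_mult degree_pCons_eq_if)
  moreover have "coeff ?Q (Suc (Suc m)) = 1"
    using 3 by (simp add: x_mult coeff_eq_0)
  ultimately show ?case by (metis le_antisym le_degree zero_neq_one)
qed auto

lemma moment_functional_three_term_poly:
  assumes T0: "\<And>k. T 0 k = s k"
    and T1: "\<And>k. T 1 k = s (Suc k) - c 1 * s k"
    and T_rec: "\<And>m k. T (Suc (Suc m)) k
      = T (Suc m) (Suc k) - c (Suc (Suc m)) * T (Suc m) k - l (Suc (Suc m)) * T m k"
  shows "moment_functional s (monom 1 k * three_term_poly c l n) = T n k"
proof (induction n arbitrary: k rule: induct_nat_012)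
  case 0
  then show ?case using T0 by (simp add: moment_functional_monom)
next
  case 1
  have "monom 1 k * [:- c 1, 1:] = monom 1 (Suc k) - smult (c 1) (monom 1 k)"
    by (simp add: monom_Suc algebra_simps mult_pCons_right)
  then show ?case using T1 by (simp add: moment_functional_diff moment_functional_smult moment_functional_monom)
next
  case (ge2 m)
  have "monom 1 k * three_term_poly c l (Suc (Suc m))
    = monom 1 (Suc k) * three_term_poly c l (Suc m) - smult (c (Suc (Suc m))) (monom 1 k * three_term_poly c l (Suc m))
      - smult (l (Suc (Suc m))) (monom 1 k * three_term_poly c l m)"
    by (simp add: monom_Suc algebra_simps mult_pCons_left)
  then show ?case using ge2 T_rec by (simp add: moment_functional_diff moment_functional_smult)
qed

lemma poly_in_span_of_degree_basis:
  fixes P :: "nat \<Rightarrow> 'a::field poly"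
  assumes deg: "\<And>n. degree (P n) = n" and nz: "\<And>n. P n \<noteq> 0"
  shows "(\<And>i. n \<le> i \<Longrightarrow> coeff R i = 0) \<Longrightarrow> \<exists>a. R = (\<Sum>m<n. smult (a m) (P m))"
proof (induction n arbitrary: R)
  case 0
  then have "R = 0" by (intro poly_eqI) simp
  then show ?case by simp
next
  case (Suc n)
  define b where "b = coeff R n / lead_coeff (P n)"
  have "lead_coeff (P n) \<noteq> 0" using nz by simp
  then have "coeff (R - smult b (P n)) i = 0" if "n \<le> i" for i
    using that Suc.prems deg[of n] by (cases "i = n") (auto simp: b_def coeff_eq_0)
  then obtain a where a: "R - smult b (P n) = (\<Sum>m<n. smult (a m) (P m))"
    using Suc.IH by blast
  have "(\<Sum>m<Suc n. smult ((a(n := b)) m) (P m)) = (\<Sum>m<n. smult (a m) (P m)) + smult b (P n)"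
    by simp
  then have "R = (\<Sum>m<Suc n. smult ((a(n := b)) m) (P m))"
    by (simp add: a[symmetric])
  then show ?case by blast
qed

context
  fixes s :: "nat \<Rightarrow> 'a::field" and P :: "nat \<Rightarrow> 'a poly"
  assumes deg: "\<And>n. degree (P n) = n"
    and orth: "\<And>m n. moment_functional s (P m * P n) = (if m = n then 1 else 0)"
begin

lemma orthonormal_nonzero: "P n \<noteq> 0"
  using orth[of n n] by auto

lemma orthonormal_orthogonal_lower:
  assumes "degree R < n"
  shows "moment_functional s (R * P n) = 0"
proof -
  have "coeff R i = 0" if "n \<le> i" for i
    using assms that by (simp add: coeff_eq_0)
  then obtain a where a: "R = (\<Sum>m<n. smult (a m) (P m))"
    using poly_in_span_of_degree_basis[OF deg orthonormal_nonzero] by blast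
  have "moment_functional s (R * P n) = (\<Sum>m<n. a m * moment_functional s (P m * P n))"
    unfolding a by (simp add: sum_distrib_right moment_functional_sum moment_functional_smult)
  also have "\<dots> = 0" by (simp add: orth)
  finally show ?thesis .
qed

lemma monic_orthogonal_eq:
  assumes Q: "degree Q = n" "coeff Q n = 1"
    and Q_orth: "\<And>R. degree R < n \<Longrightarrow> moment_functional s (R * Q) = 0"
  shows "Q = smult (1 / lead_coeff (P n)) (P n)"
proof -
  define M where "M = smult (1 / lead_coeff (P n)) (P n)"
  have "lead_coeff (P n) \<noteq> 0"
    using orthonormal_nonzero[of n] by simp
  then have M: "degree M = n" "coeff M n = 1"
    using deg[of n] by (auto simp: M_def)
  have "coeff (M - Q) i = 0" if "n \<le> i" for i
    using that M Q by (cases "i = n") (auto simp: coeff_eq_0)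
  then obtain a where a: "M - Q = (\<Sum>m<n. smult (a m) (P m))"
    using poly_in_span_of_degree_basis[OF deg orthonormal_nonzero] by blast
  have "a j = 0" if "j < n" for j
  proof -
    have "moment_functional s (P j * (M - Q)) = (\<Sum>m<n. a m * moment_functional s (P j * P m))"
      unfolding a by (simp add: sum_distrib_left moment_functional_sum moment_functional_smult)
    also have "\<dots> = (\<Sum>m<n. if m = j then a m else 0)"
      by (intro sum.cong) (auto simp: orth)
    also have "\<dots> = a j" using that by simp
    moreover have "moment_functional s (P j * (M - Q)) = 0"
      using that deg[of j] orthonormal_orthogonal_lower[of "P j" n] Q_orth[of "P j"]
      by (simp add: M_def right_diff_distrib moment_functional_diff moment_functional_smult)
    ultimately show ?thesis by simp
  qed
  then have "M - Q = 0" by (simp add: a)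
  then show ?thesis by (simp add: M_def)
qed

end

section \<open>Infinite \<open>q\<close>-Pochhammer products\<close>

lemma qpoch_inf_convergent:
  fixes a q :: real assumes "0 < q" "q < 1"
  shows "convergent_prod (\<lambda>k. 1 - a * q ^ k)"
proof -
  have "summable (\<lambda>k. \<bar>a\<bar> * q ^ k)"
    using assms by (intro summable_mult summable_geometric) auto
  then have "summable (\<lambda>i. norm ((1 - a * q ^ i) - 1))"
    using assms by (simp add: abs_mult power_abs)
  then show ?thesis
    by (intro abs_convergent_prod_imp_convergent_prod summable_imp_abs_convergent_prod)
qed

lemma qpoch_inf_unfold:
  fixes a q :: real assumes "0 < q" "q < 1"
  shows "qpoch_inf a q = (1 - a) * qpoch_inf (a * q) q"
proof -
  have "(\<lambda>k. 1 - a * q ^ k) has_prod ((\<Prod>k<1. 1 - a * q ^ k) * (\<Prod>k. 1 - a * q ^ (k + 1)))"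
    by (rule has_prod_ignore_initial_segment'[OF qpoch_inf_convergent[OF assms]])
  then have "qpoch_inf a q = (1 - a) * (\<Prod>k. 1 - a * q ^ (k + 1))"
    unfolding qpoch_inf_def by (simp add: has_prod_unique[symmetric])
  also have "(\<lambda>k. 1 - a * q ^ (k + 1)) = (\<lambda>k. 1 - (a * q) * q ^ k)"
    by (auto simp: algebra_simps)
  finally show ?thesis unfolding qpoch_inf_def .
qed

lemma qpoch_inf_nonneg:
  fixes a q :: real assumes "0 < q" "q < 1" "\<And>k. 0 \<le> 1 - a * q ^ k"
  shows "0 \<le> qpoch_inf a q"
proof -
  have "(\<lambda>n. \<Prod>i<n. 1 - a * q ^ i) \<longlonglongrightarrow> qpoch_inf a q"
    unfolding qpoch_inf_def using convergent_prod_LIMSEQ[OF qpoch_inf_convergent[OF assms(1,2)]]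
    by (simp add: LIMSEQ_lessThan_iff_atMost)
  moreover have "\<And>n. 0 \<le> (\<Prod>i<n. 1 - a * q ^ i)"
    using assms(3) by (intro prod_nonneg) auto
  ultimately show ?thesis by (intro LIMSEQ_le_const) auto
qed

lemma qpoch_inf_pos:
  fixes a q :: real assumes "0 < q" "q < 1" "\<And>k. 0 < 1 - a * q ^ k"
  shows "0 < qpoch_inf a q"
proof -
  have "qpoch_inf a q \<noteq> 0" unfolding qpoch_inf_def
    using assms by (intro prodinf_nonzero qpoch_inf_convergent) (auto simp: less_le)
  moreover have "0 \<le> qpoch_inf a q"
    using assms by (intro qpoch_inf_nonneg) (auto simp: less_imp_le)
  ultimately show ?thesis by simp
qed

lemma qpoch_inf_mono:
  fixes a b q :: real
  assumes "0 < q" "q < 1" "\<And>k. 0 \<le> 1 - a * q ^ k" "\<And>k. 1 - a * q ^ k \<le> 1 - b * q ^ k"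
  shows "qpoch_inf a q \<le> qpoch_inf b q"
  unfolding qpoch_inf_def using assms
  by (intro prodinf_le[OF convergent_prod_has_prod convergent_prod_has_prod] qpoch_inf_convergent)
    auto

definition Ainf :: "real \<Rightarrow> real \<Rightarrow> nat \<Rightarrow> real" where
  "Ainf p q n = qpoch_inf (p * q ^ n) q"

definition Binf :: "real \<Rightarrow> nat \<Rightarrow> real" where
  "Binf q n = qpoch_inf (q ^ n) q"

lemma Delta_eq: "Delta p q n = Ainf p q n - Binf q n"
  unfolding Delta_def Ainf_def Binf_def ..

lemma Ainf_Suc: "0 < q \<Longrightarrow> q < 1 \<Longrightarrow> Ainf p q n = (1 - p * q ^ n) * Ainf p q (Suc n)"
  unfolding Ainf_def using qpoch_inf_unfold[of q "p * q ^ n"] by (simp add: mult_ac)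

lemma Binf_Suc: "0 < q \<Longrightarrow> q < 1 \<Longrightarrow> Binf q n = (1 - q ^ n) * Binf q (Suc n)"
  unfolding Binf_def using qpoch_inf_unfold[of q "q ^ n"] by (simp add: mult.commute)

lemma Binf_nonneg: "0 < q \<Longrightarrow> q < 1 \<Longrightarrow> 0 \<le> Binf q n"
  unfolding Binf_def
  by (intro qpoch_inf_nonneg) (simp_all add: power_add[symmetric] power_le_one)

lemma Delta_pos:
  assumes q: "0 < q" "q < 1" and p: "0 \<le> p" "p < 1"
  shows "0 < Delta p q n"
proof -
  have qk: "q ^ k \<le> 1" "0 < q ^ k" for k
    using q by (auto intro: power_le_one)
  have pk: "p * q ^ k < 1" for k
    using qk[of k] p by (smt (verit) mult_left_le)
  have A_pos: "0 < Ainf p q (Suc n)"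
    unfolding Ainf_def using q
  proof (intro qpoch_inf_pos)
    fix k
    show "0 < 1 - p * q ^ Suc n * q ^ k"
      using pk[of "Suc n + k"] by (simp add: power_add mult.assoc)
  qed
  have B_le_A: "Binf q (Suc n) \<le> Ainf p q (Suc n)"
    unfolding Binf_def Ainf_def using q
  proof (intro qpoch_inf_mono)
    fix k
    show "0 \<le> 1 - q ^ Suc n * q ^ k"
      using qk(1)[of "Suc n + k"] by (simp add: power_add)
    have "p * q ^ (Suc n + k) \<le> q ^ (Suc n + k)"
      using qk(2)[of "Suc n + k"] p by (intro mult_left_le_one_le) auto
    then show "1 - q ^ Suc n * q ^ k \<le> 1 - p * q ^ Suc n * q ^ k"
      by (simp add: power_add mult.assoc)
  qed
  have "Delta p q n = (1 - p * q ^ n) * Ainf p q (Suc n) - (1 - q ^ n) * Binf q (Suc n)"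
    unfolding Delta_eq using Ainf_Suc[OF q] Binf_Suc[OF q] by metis
  also have "\<dots> \<ge> (1 - p * q ^ n) * Ainf p q (Suc n) - (1 - q ^ n) * Ainf p q (Suc n)"
    using B_le_A qk by (intro diff_left_mono mult_left_mono) auto
  also have "(1 - p * q ^ n) * Ainf p q (Suc n) - (1 - q ^ n) * Ainf p q (Suc n)
      = (1 - p) * q ^ n * Ainf p q (Suc n)"
    by (simp add: algebra_simps)
  finally show ?thesis using A_pos qk p by (smt (verit) mult_pos_pos)
qed

section \<open>Recurrence coefficients and closed-form moments\<close>

lemma powr_nat_add_three_halves:
  fixes q :: real assumes "0 < q"
  shows "q powr (real N + 1 + 1/2) = q ^ N * q * q powr (1/2)"
  by (simp only: powr_add powr_realpow[OF assms] powr_one[OF less_imp_le[OF assms]])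

lemma powr_half_mult_self: "0 < q \<Longrightarrow> q powr (1/2) * q powr (1/2) = (q::real)"
  by (simp add: powr_add[symmetric])

definition qpoch_neg :: "real \<Rightarrow> nat \<Rightarrow> nat \<Rightarrow> real" where
  "qpoch_neg q t k = (\<Prod>j<t. 1 - q ^ (j + 1) / q ^ k)"

lemma qpoch_neg_Suc: "qpoch_neg q (Suc t) k = qpoch_neg q t k * (1 - q ^ Suc t / q ^ k)"
  unfolding qpoch_neg_def by simp

lemma qpoch_neg_Suc_Suc:
  assumes "q \<noteq> 0" shows "qpoch_neg q (Suc t) (Suc k) = (1 - 1 / q ^ k) * qpoch_neg q t k"
proof -
  have "qpoch_neg q (Suc t) (Suc k) = (\<Prod>j<Suc t. 1 - q ^ j / q ^ k)"
    unfolding qpoch_neg_def using assms by (intro prod.cong) (auto simp: field_simps)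
  also have "\<dots> = (1 - 1 / q ^ k) * (\<Prod>j<t. 1 - q ^ Suc j / q ^ k)"
    by (subst prod.lessThan_Suc_shift) simp
  finally show ?thesis unfolding qpoch_neg_def by simp
qed

lemma qpoch_neg_eq_0: assumes "q \<noteq> 0" "1 \<le> k" "k \<le> t" shows "qpoch_neg q t k = 0"
proof -
  have "k - 1 < t" "1 - q ^ (k - 1 + 1) / q ^ k = 0" using assms by auto
  then show ?thesis unfolding qpoch_neg_def by (intro prod_zero) auto
qed

definition qgauss :: "real \<Rightarrow> nat \<Rightarrow> real" where
  "qgauss q n = q powr (- (real n * real n) - real n / 2)"

lemma qgauss_Suc:
  assumes "0 < q" shows "qgauss q (Suc n) = qgauss q n / (q ^ (2 * n) * q * q powr (1/2))"
proof -
  have "- (real (Suc n) * real (Suc n)) - real (Suc n) / 2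
      = (- (real n * real n) - real n / 2) - (real (2 * n) + 1 + 1/2)"
    by (simp add: algebra_simps)
  then have "qgauss q (Suc n) = qgauss q n / q powr (real (2 * n) + 1 + 1/2)"
    unfolding qgauss_def by (simp only: powr_diff)
  then show ?thesis by (simp only: powr_nat_add_three_halves[OF assms])
qed

lemma qgauss_1: "0 < q \<Longrightarrow> qgauss q (Suc 0) = 1 / (q * q powr (1/2))"
  using qgauss_Suc[of q 0] by (simp add: qgauss_def)

lemma qgauss_2: "0 < q \<Longrightarrow> qgauss q (Suc (Suc 0)) = 1 / (q ^ 4 * q powr (1/2) * q powr (1/2))"
  using qgauss_Suc[of q "Suc 0"] qgauss_1[of q] by (simp add: field_simps power4_eq_xxxx)

lemma smom_0: "0 < q \<Longrightarrow> smom p q 0 = (1 / q powr (1/2)) * (1 - Binf q (Suc 0) / Ainf p q (Suc 0))"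
  unfolding smom_def Ainf_def Binf_def by (simp add: powr_minus_divide[symmetric])

lemma smom_1: "0 < q \<Longrightarrow> smom p q (Suc 0) = (1 - p) / (q * q)"
  unfolding smom_def qpoch_def
  by (simp add: powr_minus_divide powr_realpow[of q 2, simplified] power2_eq_square)

lemma smom_Suc:
  assumes "0 < q" "1 \<le> k"
  shows "smom p q (Suc k) = smom p q k * (1 - p * q ^ k) / (q ^ k * q * q powr (1/2))"
proof -
  have "- (real (Suc k + 1))\<^sup>2 / 2 = - (real (k + 1))\<^sup>2 / 2 - (real k + 1 + 1/2)"
    by (simp add: power2_eq_square field_simps)
  then have "q powr (- (real (Suc k + 1))\<^sup>2 / 2)
      = q powr (- (real (k + 1))\<^sup>2 / 2) / (q ^ k * q * q powr (1/2))"
    by (simp only: powr_diff powr_nat_add_three_halves[OF assms(1)])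
  moreover have "qpoch p q (Suc k) = qpoch p q k * (1 - p * q ^ k)"
    unfolding qpoch_def by simp
  ultimately show ?thesis using assms unfolding smom_def by simp
qed

definition rec_c :: "real \<Rightarrow> real \<Rightarrow> nat \<Rightarrow> real" where
  "rec_c p q n = (if n = 1 then qpoch_inf p q / Delta p q 1 * q powr (-3/2)
                  else ((1 - q ^ n) * qpoch_inf (p * q ^ (n - 1)) q
                          - (1 - p * q ^ n) * qpoch_inf (q ^ (n - 1)) q)
                       * q powr (- 2 * real (n - 1) - 3/2) / ((1 - q) * Delta p q n)
                     - ((1 - q ^ (n - 1)) * qpoch_inf (p * q ^ (n - 2)) q
                          - (1 - p * q ^ (n - 1)) * qpoch_inf (q ^ (n - 2)) q)
                       * q powr (- 2 * real (n - 1) + 1/2) / ((1 - q) * Delta p q (n - 1)))"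

definition rec_lambda :: "real \<Rightarrow> real \<Rightarrow> nat \<Rightarrow> real" where
  "rec_lambda p q n = Delta p q (n - 2) * Delta p q n / (Delta p q (n - 1))\<^sup>2
                      * (1 - q ^ (n - 1)) * (1 - p * q ^ (n - 1)) * q powr (- 4 * real (n - 1))"

lemma rec_c_1:
  assumes "0 < q" shows "rec_c p q (Suc 0) = Ainf p q 0 / Delta p q (Suc 0) * (1 / (q * q powr (1/2)))"
proof -
  have "q powr (-3/2) = 1 / q powr (real 0 + 1 + 1/2)"
    by (simp add: powr_minus_divide[symmetric])
  also have "\<dots> = 1 / (q * q powr (1/2))"
    using powr_nat_add_three_halves[OF assms, of 0] by simp
  finally show ?thesis unfolding rec_c_def Ainf_def by simp
qed

lemma rec_c_Suc_Suc:
  assumes q: "0 < q"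
  shows "rec_c p q (Suc (Suc m))
    = ((1 - q * q * q ^ m) * Ainf p q (Suc m) - (1 - p * q * q * q ^ m) * Binf q (Suc m))
        * (1 / (q ^ m * q ^ m * q ^ 3 * q powr (1/2))) / ((1 - q) * Delta p q (Suc (Suc m)))
    - ((1 - q * q ^ m) * Ainf p q m - (1 - p * q * q ^ m) * Binf q m)
        * (1 / (q ^ m * q ^ m * q * q powr (1/2))) / ((1 - q) * Delta p q (Suc m))"
proof -
  have sq: "q ^ (2 * m) = q ^ m * q ^ m" by (simp add: mult_2 power_add)
  have "q powr (- 2 * real (Suc m) - 3/2) = 1 / q powr (real (2 * m) + 1 + 1/2 + 2)"
    by (simp add: powr_minus_divide[symmetric] algebra_simps)
  also have "q powr (real (2 * m) + 1 + 1/2 + 2) = q ^ (2 * m) * q * q powr (1/2) * q ^ 2"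
    using q by (simp only: powr_add powr_nat_add_three_halves powr_realpow) simp
  finally have p1: "q powr (- 2 * real (Suc m) - 3/2) = 1 / (q ^ m * q ^ m * q ^ 3 * q powr (1/2))"
    unfolding sq by (simp add: power2_eq_square power3_eq_cube mult_ac)
  have "- 2 * real (Suc m) + 1/2 = - (real (2 * m) + 1 + 1/2)" by simp
  then have "q powr (- 2 * real (Suc m) + 1/2) = 1 / q powr (real (2 * m) + 1 + 1/2)"
    by (simp only: powr_minus_divide)
  also have "q powr (real (2 * m) + 1 + 1/2) = q ^ (2 * m) * q * q powr (1/2)"
    by (rule powr_nat_add_three_halves[OF q])
  finally have p2: "q powr (- 2 * real (Suc m) + 1/2) = 1 / (q ^ m * q ^ m * q * q powr (1/2))"
    unfolding sq by (simp add: mult_ac)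
  have idx: "(Suc (Suc m) = 1) = False" "Suc (Suc m) - 1 = Suc m" "Suc (Suc m) - 2 = m" by simp_all
  show ?thesis unfolding rec_c_def Ainf_def Binf_def
    by (simp only: idx if_False p1 p2 power_Suc mult.assoc)
qed

lemma rec_lambda_Suc_Suc:
  assumes q: "0 < q"
  shows "rec_lambda p q (Suc (Suc m)) = Delta p q m * Delta p q (Suc (Suc m)) / (Delta p q (Suc m))\<^sup>2
    * (1 - q * q ^ m) * (1 - p * q * q ^ m) * (1 / ((q ^ m) ^ 4 * q ^ 4))"
proof -
  have "q powr (- 4 * real (Suc m)) = 1 / q powr (real (4 * Suc m))"
    by (simp add: powr_minus_divide[symmetric])
  also have "\<dots> = 1 / q ^ (4 * Suc m)" using q by (simp only: powr_realpow)
  also have "q ^ (4 * Suc m) = (q ^ m) ^ 4 * q ^ 4"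
    by (simp add: power_mult[symmetric] power_add[symmetric] mult.commute)
  finally have e: "q powr (- 4 * real (Suc m)) = 1 / ((q ^ m) ^ 4 * q ^ 4)" .
  have idx: "Suc (Suc m) - 1 = Suc m" "Suc (Suc m) - 2 = m" by simp_all
  show ?thesis unfolding rec_lambda_def by (simp only: idx e power_Suc mult.assoc)
qed

text \<open>Closed form of the moments \<open>L(x\<^sup>k p\<^sub>n)\<close> of the monic orthogonal polynomials.\<close>
definition pmoment :: "real \<Rightarrow> real \<Rightarrow> nat \<Rightarrow> nat \<Rightarrow> real" where
  "pmoment p q n k = (if n = 0 then smom p q k else if k = 0 then 0 else
     smom p q k * qpoch_neg q (n - 1) k * (-1) ^ (n + 1) * qgauss q n
     * (1 / q ^ k - (Ainf p q n - p * Binf q n) / Delta p q n))"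

lemma pmoment_vanish: assumes "0 < q" "k < n" shows "pmoment p q n k = 0"
proof (cases "k = 0")
  case False
  then have "qpoch_neg q (n - 1) k = 0" using assms by (intro qpoch_neg_eq_0) auto
  then show ?thesis using assms by (simp add: pmoment_def)
qed (use assms in \<open>simp add: pmoment_def\<close>)

lemma pmoment_Suc_Suc:
  "pmoment p q (Suc t) (Suc j) = smom p q (Suc j) * qpoch_neg q t (Suc j) * (-1) ^ (Suc t + 1)
    * qgauss q (Suc t) * (1 / q ^ Suc j - (Ainf p q (Suc t) - p * Binf q (Suc t)) / Delta p q (Suc t))"
  by (simp only: pmoment_def nat.distinct if_False diff_Suc_1)

lemma pmoment_Suc2_Suc:
  assumes q: "0 < q"
  shows "pmoment p q (Suc (Suc t)) (Suc j) =
    smom p q (Suc j) * (qpoch_neg q t (Suc j) * (1 - q ^ Suc t / q ^ Suc j)) * (- ((-1) ^ (Suc t + 1)))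
    * (qgauss q (Suc t) / (q ^ Suc t * q ^ Suc t * q * q powr (1/2)))
    * (1 / q ^ Suc j - (Ainf p q (Suc (Suc t)) - p * Binf q (Suc (Suc t))) / Delta p q (Suc (Suc t)))"
proof -
  have g: "qgauss q (Suc (Suc t)) = qgauss q (Suc t) / (q ^ Suc t * q ^ Suc t * q * q powr (1/2))"
    unfolding qgauss_Suc[OF q, of "Suc t"] by (simp add: mult_2 power_add)
  have s: "(-1::real) ^ (Suc (Suc t) + 1) = - ((-1) ^ (Suc t + 1))" by simp
  show ?thesis by (simp only: pmoment_Suc_Suc g s qpoch_neg_Suc)
qed

lemma pmoment_Suc2_Suc2:
  assumes q: "0 < q"
  shows "pmoment p q (Suc (Suc t)) (Suc (Suc j)) =
    (smom p q (Suc j) * (1 - p * q ^ Suc j) / (q ^ Suc j * q * q powr (1/2)))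
    * ((1 - 1 / q ^ Suc j) * qpoch_neg q t (Suc j)) * (- ((-1) ^ (Suc t + 1)))
    * (qgauss q (Suc t) / (q ^ Suc t * q ^ Suc t * q * q powr (1/2)))
    * (1 / (q * q ^ Suc j) - (Ainf p q (Suc (Suc t)) - p * Binf q (Suc (Suc t))) / Delta p q (Suc (Suc t)))"
proof -
  have g: "qgauss q (Suc (Suc t)) = qgauss q (Suc t) / (q ^ Suc t * q ^ Suc t * q * q powr (1/2))"
    unfolding qgauss_Suc[OF q, of "Suc t"] by (simp add: mult_2 power_add)
  have n: "qpoch_neg q (Suc t) (Suc (Suc j)) = (1 - 1 / q ^ Suc j) * qpoch_neg q t (Suc j)"
    using qpoch_neg_Suc_Suc[of q t "Suc j"] q by simp
  have m: "smom p q (Suc (Suc j)) = smom p q (Suc j) * (1 - p * q ^ Suc j) / (q ^ Suc j * q * q powr (1/2))"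
    using smom_Suc[OF q, of "Suc j"] by simp
  have s: "(-1::real) ^ (Suc (Suc t) + 1) = - ((-1) ^ (Suc t + 1))" by simp
  have qq: "q ^ Suc (Suc j) = q * q ^ Suc j" by simp
  show ?thesis by (simp only: pmoment_Suc_Suc g n m s qq)
qed

lemma pmoment_Suc3_Suc:
  assumes q: "0 < q"
  shows "pmoment p q (Suc (Suc (Suc t))) (Suc j) =
    smom p q (Suc j) * (qpoch_neg q t (Suc j) * (1 - q ^ Suc t / q ^ Suc j) * (1 - q * q ^ Suc t / q ^ Suc j))
    * (-1) ^ (Suc t + 1) * (qgauss q (Suc t) / ((q ^ Suc t) ^ 4 * q ^ 4 * q powr (1/2) * q powr (1/2)))
    * (1 / q ^ Suc j - (Ainf p q (Suc (Suc (Suc t))) - p * Binf q (Suc (Suc (Suc t))))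
        / Delta p q (Suc (Suc (Suc t))))"
proof -
  have "q powr (1/2) \<noteq> 0" using q by simp
  then have g: "qgauss q (Suc (Suc (Suc t)))
      = qgauss q (Suc t) / ((q ^ Suc t) ^ 4 * q ^ 4 * q powr (1/2) * q powr (1/2))"
    unfolding qgauss_Suc[OF q] using q
    by (simp add: field_simps power_add power_mult mult_2 eval_nat_numeral)
  have s: "(-1::real) ^ (Suc (Suc (Suc t)) + 1) = (-1) ^ (Suc t + 1)" by simp
  have qq: "q ^ Suc (Suc t) = q * q ^ Suc t" by simp
  show ?thesis by (simp only: pmoment_Suc_Suc g s qq qpoch_neg_Suc)
qed

section \<open>Verification of the recurrence\<close>

lemma c1_identity_0:
  fixes p q W A0 A1 B1 D1 :: real
  assumes qW: "q = W * W" and nz: "W \<noteq> 0" "A1 \<noteq> 0" "D1 \<noteq> 0"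
    and r: "A0 = (1 - p) * A1" "D1 = A1 - B1"
  shows "(1 - p) / (q * q) - A0 / D1 * (1 / (q * W)) * ((1 / W) * (1 - B1 / A1)) = 0"
  using nz unfolding qW r by (simp add: field_simps)

lemma c1_identity:
  fixes p q W U A0 A1 B1 D1 s :: real
  assumes qW: "q = W * W" and nz: "W \<noteq> 0" "U \<noteq> 0" "D1 \<noteq> 0"
    and r: "A0 = (1 - p) * A1" "D1 = A1 - B1"
  shows "s * (1 - p * U) / (U * q * W) - A0 / D1 * (1 / (q * W)) * s
    = s * (1 / (q * W)) * (1 / U - (A1 - p * B1) / D1)"
  using nz unfolding qW r by (simp add: field_simps)

lemma lambda2_identity:
  fixes p q W A2 B2 A1 B1 A0 D2 D1 D0 :: real
  assumes qW: "q = W * W" and nz: "W \<noteq> 0" "A1 \<noteq> 0" "D1 \<noteq> 0" "D2 \<noteq> 0"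
    and r: "A1 = (1 - p * q) * A2" "B1 = (1 - q) * B2" "A0 = (1 - p) * A1"
      "D2 = A2 - B2" "D1 = A1 - B1" "D0 = A0"
  shows "(1 - p) / (q * q) * (1 / (q * W)) * (1 / q - (A1 - p * B1) / D1)
    = (D0 * D2 / D1\<^sup>2 * (1 - q) * (1 - p * q) * (1 / q ^ 4)) * ((1 / W) * (1 - B1 / A1))"
proof -
  have key: "D1 - q * (A1 - p * B1) = D2 * (1 - q) * (1 - p * q)"
    unfolding r(5) unfolding r(1,2,4) by algebra
  have b: "1 - B1 / A1 = D1 / A1" using nz(2) unfolding r(5) by (simp add: field_simps)
  have q0: "q \<noteq> 0" using qW nz by simp
  have "(1 - p) / (q * q) * (1 / (q * W)) * (1 / q - (A1 - p * B1) / D1)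
      = (1 - p) * (D1 - q * (A1 - p * B1)) / (q ^ 4 * W * D1)"
    using nz q0 by (simp add: field_simps power4_eq_xxxx)
  also have "\<dots> = (1 - p) * (D2 * (1 - q) * (1 - p * q)) / (q ^ 4 * W * D1)" unfolding key ..
  also have "\<dots> = (D0 * D2 / D1\<^sup>2 * (1 - q) * (1 - p * q) * (1 / q ^ 4)) * ((1 / W) * (D1 / A1))"
    unfolding r(6) r(3) using nz q0 by (simp add: field_simps power2_eq_square)
  finally show ?thesis unfolding b .
qed

text \<open>The recurrence for \<open>pmoment\<close> at \<open>n = 2\<close>, \<open>k = j + 1\<close>, with \<open>U = q\<^bsup>j+1\<^esup>\<close>; the row
  \<open>n = 0\<close> is \<open>smom\<close> itself rather than the closed form, and \<open>B0 = Binf q 0 = 0\<close>.\<close>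
lemma recurrence_identity_2:
  fixes p q W U A2 B2 A1 B1 A0 B0 D2 D1 D0 s :: real
  assumes qW: "q = W * W" and nz: "W \<noteq> 0" "U \<noteq> 0" "1 - q \<noteq> 0" "D1 \<noteq> 0" "D2 \<noteq> 0"
    and r: "A1 = (1 - p * q) * A2" "B1 = (1 - q) * B2" "A0 = (1 - p) * A1" "B0 = 0"
      "D2 = A2 - B2" "D1 = A1 - B1" "D0 = A0 - B0"
  shows "s * (1 - q / U) * (-1) * (1 / (q ^ 4 * W * W)) * (1 / U - (A2 - p * B2) / D2)
    = (s * (1 - p * U) / (U * q * W)) * (1 / (q * W)) * (1 / (q * U) - (A1 - p * B1) / D1)
     - (((1 - q * q) * A1 - (1 - p * q * q) * B1) * (1 / (q ^ 3 * W)) / ((1 - q) * D2)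
        - ((1 - q) * A0 - (1 - p * q) * B0) * (1 / (q * W)) / ((1 - q) * D1))
       * (s * (1 / (q * W)) * (1 / U - (A1 - p * B1) / D1))
     - (D0 * D2 / D1\<^sup>2 * (1 - q) * (1 - p * q) * (1 / q ^ 4)) * s"
  (is "?X = ?Y2 - ?C * ?Y3 - ?Lm * ?s")
proof -
  have q0: "q \<noteq> 0" using qW nz by simp
  define N2 where "N2 = (1 - q * q) * A1 - (1 - p * q * q) * B1"
  define N1 where "N1 = (1 - q) * A0 - (1 - p * q) * B0"
  define L where "L = U\<^sup>2 * q ^ 5 * W * W * (1 - q) * D2 * D1\<^sup>2"
  have L0: "L \<noteq> 0" unfolding L_def using nz q0 by simp
  have e1: "?X * L = s * (- (U - q) * (D2 - U * (A2 - p * B2)) * q * (1 - q) * D1\<^sup>2)"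
    unfolding L_def using nz q0 apply (simp add: field_simps) by algebra
  have e2: "?Y2 * L = s * ((1 - p * U) * (D1 - q * U * (A1 - p * B1)) * q * q * (1 - q) * D2 * D1)"
    unfolding L_def using nz q0 unfolding qW apply (simp add: field_simps) by algebra
  have Y3: "?Y3 = s * (D1 - U * (A1 - p * B1)) / (U * q * W * D1)"
    using nz q0 by (simp add: field_simps)
  have common_denom: "N2 * (1 / (q ^ 3 * W)) / (E * D2) - N1 * (1 / (q * W)) / (E * D1)
      = (N2 * D1 - q * q * N1 * D2) / (q ^ 3 * W * E * D2 * D1)" if "E \<noteq> 0" for E
    using nz q0 that apply (simp add: field_simps) by algebra
  have C: "?C = (N2 * D1 - q * q * N1 * D2) / (q ^ 3 * W * (1 - q) * D2 * D1)"
    unfolding N1_def[symmetric] N2_def[symmetric] by (rule common_denom) (use nz in simp)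
  have clear: "(X / (q ^ 3 * W * E * D2 * D1)) * (K * Y / (U * q * W * D1))
      * (U\<^sup>2 * q ^ 5 * W * W * E * D2 * D1\<^sup>2) = K * (U * q * Y * X)" if "E \<noteq> 0" for X Y K E
    using nz q0 that apply (simp add: field_simps power2_eq_square) by algebra
  have e3: "?C * ?Y3 * L = s * (U * q * (D1 - U * (A1 - p * B1)) * (N2 * D1 - q * q * N1 * D2))"
    unfolding Y3 C L_def by (rule clear) (use nz in simp)
  have e4: "?Lm * ?s * L = s * (D0 * D2 * (1 - q) * (1 - p * q) * U\<^sup>2 * q * (W * W) * (1 - q) * D2)"
    unfolding L_def using nz q0 apply (simp add: field_simps) by algebra
  have P: "- (U - q) * (D2 - U * (A2 - p * B2)) * q * (1 - q) * D1\<^sup>2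
    = (1 - p * U) * (D1 - q * U * (A1 - p * B1)) * q * q * (1 - q) * D2 * D1
     - U * q * (D1 - U * (A1 - p * B1)) * (N2 * D1 - q * q * N1 * D2)
     - D0 * D2 * (1 - q) * (1 - p * q) * U\<^sup>2 * q * q * (1 - q) * D2"
    unfolding r N1_def N2_def by algebra
  have "?X * L = ?Y2 * L - ?C * ?Y3 * L - ?Lm * ?s * L"
    unfolding e1 e2 e3 e4 qW[symmetric] using P by (simp add: right_diff_distrib[symmetric])
  then have "?X * L = (?Y2 - ?C * ?Y3 - ?Lm * ?s) * L" by (simp only: left_diff_distrib)
  then show ?thesis using mult_right_cancel[OF L0] by blast
qed

lemma recurrence_identity_poly:
  fixes p q Q U A B A1 B1 A0 B0 :: real
  assumes "A1 = (1 - p * q * Q) * A" "B1 = (1 - q * Q) * B" "A0 = (1 - p * Q) * A1" "B0 = (1 - Q) * B1"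
  shows "(U - Q) * (U - q * Q) * ((A - B) - U * (A - p * B)) * (1 - q) * (A1 - B1)\<^sup>2
    = - (1 - p * U) * (U - 1) * ((A1 - B1) - q * U * (A1 - p * B1)) * Q\<^sup>2 * q * (1 - q) * (A - B) * (A1 - B1)
      + (U - Q) * ((A1 - B1) - U * (A1 - p * B1)) * U
        * ((A1 - B1) * ((1 - q * q * Q) * A1 - (1 - p * q * q * Q) * B1)
           - q * q * (A - B) * ((1 - q * Q) * A0 - (1 - p * q * Q) * B0))
      - (A - B) * (1 - q * Q) * (1 - p * q * Q) * ((A0 - B0) - U * (A0 - p * B0)) * U\<^sup>2 * q * (1 - q) * (A - B)"
  unfolding assms by algebra

text \<open>The recurrence for \<open>pmoment\<close> at \<open>n = t + 3\<close>, \<open>k = j + 1\<close>: here \<open>W = q\<^bsup>1/2\<^esup>\<close>,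
  \<open>Q = q\<^bsup>t+1\<^esup>\<close>, \<open>U = q\<^bsup>j+1\<^esup>\<close>; \<open>(A, B)\<close>, \<open>(A1, B1)\<close>, \<open>(A0, B0)\<close> are \<open>(Ainf, Binf)\<close> at
  \<open>t + 3\<close>, \<open>t + 2\<close>, \<open>t + 1\<close> and \<open>D2, D1, D0\<close> the corresponding values of \<open>Delta\<close>; \<open>s\<close>, \<open>G\<close>,
  \<open>\<sigma>\<close>, \<open>\<beta>\<close> stand for the factors \<open>smom\<close>, \<open>qpoch_neg\<close>, sign and \<open>qgauss\<close> common to all terms.\<close>
lemma recurrence_identity:
  fixes p q W Q U A B A1 B1 A0 B0 D2 D1 D0 E N1 N2 s G \<sigma> \<beta> :: real
  assumes qW: "q = W * W" and nz: "W \<noteq> 0" "Q \<noteq> 0" "U \<noteq> 0" "E \<noteq> 0"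
    and AB: "A1 = (1 - p * q * Q) * A" "B1 = (1 - q * Q) * B" "A0 = (1 - p * Q) * A1" "B0 = (1 - Q) * B1"
    and Dd: "D2 = A - B" "D1 = A1 - B1" "D0 = A0 - B0" "E = 1 - q"
    and N: "N2 = (1 - q * q * Q) * A1 - (1 - p * q * q * Q) * B1"
      "N1 = (1 - q * Q) * A0 - (1 - p * q * Q) * B0"
    and D: "D2 \<noteq> 0" "D1 \<noteq> 0" "D0 \<noteq> 0"
  shows "s * (G * (1 - Q / U) * (1 - q * Q / U)) * \<sigma> * (\<beta> / (Q ^ 4 * q ^ 4 * W * W)) * (1 / U - (A - p * B) / D2)
    = (s * (1 - p * U) / (U * q * W)) * ((1 - 1 / U) * G) * (- \<sigma>) * (\<beta> / (Q * Q * q * W))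
        * (1 / (q * U) - (A1 - p * B1) / D1)
    - (N2 * (1 / (Q * Q * q ^ 3 * W)) / (E * D2) - N1 * (1 / (Q * Q * q * W)) / (E * D1))
      * (s * (G * (1 - Q / U)) * (- \<sigma>) * (\<beta> / (Q * Q * q * W)) * (1 / U - (A1 - p * B1) / D1))
    - (D0 * D2 / D1\<^sup>2 * (1 - q * Q) * (1 - p * q * Q) * (1 / (Q ^ 4 * q ^ 4)))
      * (s * G * \<sigma> * \<beta> * (1 / U - (A0 - p * B0) / D0))"
  (is "?X = ?Y2 - ?C * ?Y3 - ?Lm * ?Y4")
proof -
  define L where "L = U ^ 3 * Q ^ 4 * q ^ 5 * E * D2 * D1\<^sup>2"
  have q0: "q \<noteq> 0" using qW nz by simp
  have L0: "L \<noteq> 0" unfolding L_def using nz D q0 by simp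
  have e1: "?X * L = s * G * \<sigma> * \<beta> * ((U - Q) * (U - q * Q) * (D2 - U * (A - p * B)) * E * D1\<^sup>2)"
    unfolding L_def using nz D unfolding qW apply (simp add: field_simps) by algebra
  have e2: "?Y2 * L = s * G * \<sigma> * \<beta> * (- (1 - p * U) * (U - 1) * (D1 - q * U * (A1 - p * B1)) * Q\<^sup>2 * q * E * D2 * D1)"
    unfolding L_def using nz D unfolding qW apply (simp add: field_simps) by algebra
  have Y3: "?Y3 = s * G * (- \<sigma>) * \<beta> * ((U - Q) * (D1 - U * (A1 - p * B1))) / (U\<^sup>2 * Q * Q * q * W * D1)"
    using nz q0 D apply (simp add: field_simps) by algebra
  have C: "?C = (N2 * D1 - q * q * D2 * N1) / (Q * Q * q ^ 3 * W * E * D2 * D1)"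
    using nz q0 D apply (simp add: field_simps) by algebra
  have "?C * ?Y3 * L = (s * G * (- \<sigma>) * \<beta>) * (U * ((U - Q) * (D1 - U * (A1 - p * B1))) * (N2 * D1 - q * q * D2 * N1))"
    unfolding Y3 C L_def using nz D unfolding qW apply (simp add: field_simps) by algebra
  then have e3: "?C * ?Y3 * L = s * G * \<sigma> * \<beta> * (- (U - Q) * (D1 - U * (A1 - p * B1)) * U * (D1 * N2 - q * q * D2 * N1))"
    by (simp add: algebra_simps)
  have e4: "?Lm * ?Y4 * L = s * G * \<sigma> * \<beta> * (D2 * (1 - q * Q) * (1 - p * q * Q) * (D0 - U * (A0 - p * B0)) * U\<^sup>2 * q * E * D2)"
    unfolding L_def using nz D unfolding qW apply (simp add: field_simps) by algebra
  have P: "(U - Q) * (U - q * Q) * (D2 - U * (A - p * B)) * E * D1\<^sup>2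
    = - (1 - p * U) * (U - 1) * (D1 - q * U * (A1 - p * B1)) * Q\<^sup>2 * q * E * D2 * D1
      + (U - Q) * (D1 - U * (A1 - p * B1)) * U * (D1 * N2 - q * q * D2 * N1)
      - D2 * (1 - q * Q) * (1 - p * q * Q) * (D0 - U * (A0 - p * B0)) * U\<^sup>2 * q * E * D2"
    unfolding Dd N by (rule recurrence_identity_poly[OF AB])
  have "?X * L = ?Y2 * L - ?C * ?Y3 * L - ?Lm * ?Y4 * L"
    unfolding e1 e2 e3 e4 using P by algebra
  then have "?X * L = (?Y2 - ?C * ?Y3 - ?Lm * ?Y4) * L" by (simp only: left_diff_distrib)
  then show ?thesis using mult_right_cancel[OF L0] by blast
qed

context
  fixes p q :: real
  assumes q: "0 < q" "q < 1" and p: "0 \<le> p" "p < 1"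
begin

lemma q_half_powr_sq: "q = q powr (1/2) * q powr (1/2)" "q powr (1/2) \<noteq> 0"
  using powr_half_mult_self[OF q(1)] q(1) by simp_all

lemma Delta_nonzero: "Delta p q n \<noteq> 0"
  using Delta_pos[OF q p, of n] by simp

lemma Ainf_1_nonzero: "Ainf p q (Suc 0) \<noteq> 0"
  using Delta_pos[OF q p, of "Suc 0"] Binf_nonneg[OF q, of "Suc 0"] by (simp add: Delta_eq)

lemma Ainf_0: "Ainf p q 0 = (1 - p) * Ainf p q (Suc 0)"
  using Ainf_Suc[OF q, of p 0] by simp

lemma Ainf_1: "Ainf p q (Suc 0) = (1 - p * q) * Ainf p q (Suc (Suc 0))"
  using Ainf_Suc[OF q, of p "Suc 0"] by simp

lemma Binf_0: "Binf q 0 = 0"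
  using Binf_Suc[OF q, of 0] by simp

lemma Binf_1: "Binf q (Suc 0) = (1 - q) * Binf q (Suc (Suc 0))"
  using Binf_Suc[OF q, of "Suc 0"] by simp

lemma pmoment_1: "pmoment p q (Suc 0) k = smom p q (Suc k) - rec_c p q (Suc 0) * smom p q k"
proof (cases k)
  case 0
  have "smom p q (Suc 0) - rec_c p q (Suc 0) * smom p q 0 = 0"
    unfolding rec_c_1[OF q(1)] smom_1[OF q(1)] smom_0[OF q(1)]
    by (rule c1_identity_0[OF q_half_powr_sq Ainf_1_nonzero Delta_nonzero Ainf_0 Delta_eq])
  then show ?thesis using 0 by (simp add: pmoment_def)
next
  case (Suc j)
  have T: "pmoment p q (Suc 0) (Suc j) = smom p q (Suc j) * (1 / (q * q powr (1/2)))
      * (1 / q ^ Suc j - (Ainf p q (Suc 0) - p * Binf q (Suc 0)) / Delta p q (Suc 0))"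
    unfolding pmoment_def using qgauss_1[OF q(1)] by (simp add: qpoch_neg_def)
  have S: "smom p q (Suc (Suc j))
      = smom p q (Suc j) * (1 - p * q ^ Suc j) / (q ^ Suc j * q * q powr (1/2))"
    using smom_Suc[OF q(1), of "Suc j"] by simp
  show ?thesis unfolding Suc T S rec_c_1[OF q(1)]
    by (intro c1_identity[OF q_half_powr_sq _ Delta_nonzero Ainf_0 Delta_eq, symmetric]) (use q(1) in simp)
qed

lemma rec_lambda_2:
  "rec_lambda p q (Suc (Suc 0))
    = Delta p q 0 * Delta p q (Suc (Suc 0)) / (Delta p q (Suc 0))\<^sup>2 * (1 - q) * (1 - p * q) * (1 / q ^ 4)"
  using rec_lambda_Suc_Suc[OF q(1), of p 0] by simp

lemma pmoment_rec_2_0: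
  "pmoment p q (Suc (Suc 0)) 0 = pmoment p q (Suc 0) (Suc 0) - rec_c p q (Suc (Suc 0)) * pmoment p q (Suc 0) 0
    - rec_lambda p q (Suc (Suc 0)) * pmoment p q 0 0"
proof -
  have T: "pmoment p q (Suc 0) (Suc 0) = (1 - p) / (q * q) * (1 / (q * q powr (1/2)))
      * (1 / q - (Ainf p q (Suc 0) - p * Binf q (Suc 0)) / Delta p q (Suc 0))"
    unfolding pmoment_def using qgauss_1[OF q(1)] smom_1[OF q(1)] by (simp add: qpoch_neg_def)
  have "pmoment p q (Suc 0) (Suc 0) = rec_lambda p q (Suc (Suc 0)) * smom p q 0"
    unfolding T rec_lambda_2 smom_0[OF q(1)]
    by (rule lambda2_identity[OF q_half_powr_sq Ainf_1_nonzero Delta_nonzero Delta_nonzero Ainf_1 Binf_1 Ainf_0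
          Delta_eq Delta_eq]) (simp add: Delta_eq Binf_0)
  then show ?thesis by (simp add: pmoment_def)
qed

lemma pmoment_rec_2_Suc:
  "pmoment p q (Suc (Suc 0)) (Suc j) = pmoment p q (Suc 0) (Suc (Suc j))
    - rec_c p q (Suc (Suc 0)) * pmoment p q (Suc 0) (Suc j) - rec_lambda p q (Suc (Suc 0)) * pmoment p q 0 (Suc j)"
proof -
  let ?W = "q powr (1/2)" and ?U = "q ^ Suc j" and ?s = "smom p q (Suc j)"
  have T2: "pmoment p q (Suc (Suc 0)) (Suc j) = ?s * (1 - q / ?U) * (-1) * (1 / (q ^ 4 * ?W * ?W))
      * (1 / ?U - (Ainf p q (Suc (Suc 0)) - p * Binf q (Suc (Suc 0))) / Delta p q (Suc (Suc 0)))"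
    unfolding pmoment_def using qgauss_2[OF q(1)] by (simp add: qpoch_neg_def)
  have T1_Suc: "pmoment p q (Suc 0) (Suc (Suc j)) = (?s * (1 - p * ?U) / (?U * q * ?W)) * (1 / (q * ?W))
      * (1 / (q * ?U) - (Ainf p q (Suc 0) - p * Binf q (Suc 0)) / Delta p q (Suc 0))"
    unfolding pmoment_def using qgauss_1[OF q(1)] smom_Suc[OF q(1), of "Suc j" p] by (simp add: qpoch_neg_def)
  have T1: "pmoment p q (Suc 0) (Suc j) = ?s * (1 / (q * ?W))
      * (1 / ?U - (Ainf p q (Suc 0) - p * Binf q (Suc 0)) / Delta p q (Suc 0))"
    unfolding pmoment_def using qgauss_1[OF q(1)] by (simp add: qpoch_neg_def)
  have T0: "pmoment p q 0 (Suc j) = ?s" unfolding pmoment_def by simp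
  have c: "rec_c p q (Suc (Suc 0))
      = ((1 - q * q) * Ainf p q (Suc 0) - (1 - p * q * q) * Binf q (Suc 0)) * (1 / (q ^ 3 * ?W))
          / ((1 - q) * Delta p q (Suc (Suc 0)))
        - ((1 - q) * Ainf p q 0 - (1 - p * q) * Binf q 0) * (1 / (q * ?W)) / ((1 - q) * Delta p q (Suc 0))"
    using rec_c_Suc_Suc[OF q(1), of p 0] by simp
  show ?thesis unfolding T2 T1_Suc T1 T0 c rec_lambda_2
    by (rule recurrence_identity_2[OF q_half_powr_sq _ _ Delta_nonzero Delta_nonzero Ainf_1 Binf_1 Ainf_0 Binf_0
          Delta_eq Delta_eq Delta_eq]) (use q in simp_all)
qed

lemma pmoment_rec_Suc3_0:
  "pmoment p q (Suc (Suc (Suc t))) 0 = pmoment p q (Suc (Suc t)) (Suc 0)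
    - rec_c p q (Suc (Suc (Suc t))) * pmoment p q (Suc (Suc t)) 0 - rec_lambda p q (Suc (Suc (Suc t))) * pmoment p q (Suc t) 0"
  using pmoment_vanish[OF q(1), of "Suc 0" "Suc (Suc t)"] by (simp add: pmoment_def)

lemma pmoment_rec_Suc3_Suc:
  "pmoment p q (Suc (Suc (Suc t))) (Suc j) = pmoment p q (Suc (Suc t)) (Suc (Suc j))
    - rec_c p q (Suc (Suc (Suc t))) * pmoment p q (Suc (Suc t)) (Suc j)
    - rec_lambda p q (Suc (Suc (Suc t))) * pmoment p q (Suc t) (Suc j)"
proof -
  let ?Q = "q ^ Suc t"
  have nz: "?Q \<noteq> 0" "q ^ Suc j \<noteq> 0" "1 - q \<noteq> 0" using q by auto
  have AB: "Ainf p q (Suc (Suc t)) = (1 - p * q * ?Q) * Ainf p q (Suc (Suc (Suc t)))"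
           "Binf q (Suc (Suc t)) = (1 - q * ?Q) * Binf q (Suc (Suc (Suc t)))"
           "Ainf p q (Suc t) = (1 - p * ?Q) * Ainf p q (Suc (Suc t))"
           "Binf q (Suc t) = (1 - ?Q) * Binf q (Suc (Suc t))"
    using Ainf_Suc[OF q, of p "Suc (Suc t)"] Binf_Suc[OF q, of "Suc (Suc t)"]
          Ainf_Suc[OF q, of p "Suc t"] Binf_Suc[OF q, of "Suc t"]
    by (simp_all only: power_Suc[of q "Suc t"] mult.assoc)
  show ?thesis
    unfolding pmoment_Suc3_Suc[OF q(1), of p t j] pmoment_Suc2_Suc2[OF q(1), of p t j]
      pmoment_Suc2_Suc[OF q(1), of p t j] pmoment_Suc_Suc[of p q t j]
      rec_c_Suc_Suc[OF q(1), of p "Suc t"] rec_lambda_Suc_Suc[OF q(1), of p "Suc t"]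
    by (rule recurrence_identity[OF q_half_powr_sq nz AB Delta_eq Delta_eq Delta_eq refl refl refl
          Delta_nonzero Delta_nonzero Delta_nonzero])
qed

lemma pmoment_rec:
  "pmoment p q (Suc (Suc m)) k = pmoment p q (Suc m) (Suc k)
    - rec_c p q (Suc (Suc m)) * pmoment p q (Suc m) k - rec_lambda p q (Suc (Suc m)) * pmoment p q m k"
proof (cases m)
  case 0
  then show ?thesis using pmoment_rec_2_0 pmoment_rec_2_Suc by (cases k) auto
next
  case (Suc t)
  then show ?thesis using pmoment_rec_Suc3_0 pmoment_rec_Suc3_Suc by (cases k) auto
qed

lemma moment_functional_rec_poly:
  "moment_functional (smom p q) (monom 1 k * three_term_poly (rec_c p q) (rec_lambda p q) n) = pmoment p q n k"
proof (rule moment_functional_three_term_poly)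
  show "pmoment p q 0 k = smom p q k" for k
    by (simp add: pmoment_def)
  show "pmoment p q 1 k = smom p q (Suc k) - rec_c p q 1 * smom p q k" for k
    using pmoment_1 by simp
qed (rule pmoment_rec)

lemma monic_orthonormal_eq_rec_poly:
  fixes P :: "nat \<Rightarrow> real poly"
  assumes deg: "\<And>n. degree (P n) = n"
    and orth: "\<And>m n. momL p q (P m * P n) = (if m = n then 1 else 0)"
  shows "smult (1 / lead_coeff (P n)) (P n) = three_term_poly (rec_c p q) (rec_lambda p q) n"
proof (rule monic_orthogonal_eq[OF deg orth[unfolded momL_eq_moment_functional], symmetric])
  let ?Q = "three_term_poly (rec_c p q) (rec_lambda p q) n"
  show "degree ?Q = n" "coeff ?Q n = 1"
    using three_term_poly_monic by auto
  show "moment_functional (smom p q) (R * ?Q) = 0" if "degree R < n" for R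
  proof (rule moment_functional_monom_mult_vanish[OF _ that])
    show "moment_functional (smom p q) (monom 1 k * ?Q) = 0" if "k < n" for k
      unfolding moment_functional_rec_poly using pmoment_vanish[OF q(1) that] .
  qed
qed

end

theorem theorem5:
  fixes p q :: real and P :: "nat \<Rightarrow> real poly"
  assumes "0 < q" "q < 1" "0 \<le> p" "p < 1"
    and deg: "\<And>n. degree (P n) = n"
    and lead: "\<And>n. lead_coeff (P n) > 0"
    and orth: "\<And>m n. momL p q (P m * P n) = (if m = n then 1 else 0)"
  shows "let pm = (\<lambda>n. smult (1 / lead_coeff (P n)) (P n));
             c = (\<lambda>n. if n = 1 then qpoch_inf p q / Delta p q 1 * q powr (-3/2)
                       else ((1 - q ^ n) * qpoch_inf (p * q ^ (n - 1)) q
                               - (1 - p * q ^ n) * qpoch_inf (q ^ (n - 1)) q)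
                            * q powr (- 2 * real (n - 1) - 3/2) / ((1 - q) * Delta p q n)
                          - ((1 - q ^ (n - 1)) * qpoch_inf (p * q ^ (n - 2)) q
                               - (1 - p * q ^ (n - 1)) * qpoch_inf (q ^ (n - 2)) q)
                            * q powr (- 2 * real (n - 1) + 1/2) / ((1 - q) * Delta p q (n - 1)));
             lam = (\<lambda>n. Delta p q (n - 2) * Delta p q n / (Delta p q (n - 1))\<^sup>2
                        * (1 - q ^ (n - 1)) * (1 - p * q ^ (n - 1)) * q powr (- 4 * real (n - 1)))
         in pm 0 = 1 \<and> pm 1 = [:- c 1, 1:] * pm 0 \<and>
            (\<forall>n\<ge>1. pm (n + 1) = [:- c (n + 1), 1:] * pm n - smult (lam (n + 1)) (pm (n - 1)))"
proof -
  let ?pm = "\<lambda>n. smult (1 / lead_coeff (P n)) (P n)"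
  let ?Q = "three_term_poly (rec_c p q) (rec_lambda p q)"
  have pm_eq: "?pm n = ?Q n" for n
    using monic_orthonormal_eq_rec_poly[OF assms(1-4) deg orth] .
  have Q_rec: "?Q (n + 1) = [:- rec_c p q (n + 1), 1:] * ?Q n - smult (rec_lambda p q (n + 1)) (?Q (n - 1))"
    if "n \<ge> 1" for n
    using that by (cases n) simp_all
  have "?pm 0 = 1 \<and> ?pm 1 = [:- rec_c p q 1, 1:] * ?pm 0 \<and>
      (\<forall>n\<ge>1. ?pm (n + 1) = [:- rec_c p q (n + 1), 1:] * ?pm n - smult (rec_lambda p q (n + 1)) (?pm (n - 1)))"
    unfolding pm_eq using Q_rec by simp
  then show ?thesis unfolding Let_def rec_c_def rec_lambda_def .
qed

end
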